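(* Let $T$ be an infinite, locally finite tree (connected acyclic graph). Then $T$ has finite metric dimension if and only if the set of vertices of $T$ of degree at least three is finite.
   Context: $d$ denotes shortest-path distance. A vertex $x$ resolves $u,v$ if $d(u,x)\ne d(v,x)$; a set $S$ of vertices is a resolving set if every pair of distinct vertices is resolved by some vertex of $S$. The metric dimension $\beta(G)$ is the minimum cardinality of a resolving set if a finite one exists, and $\infty$ otherwise. *)

theory Defs
  imports Main "HOL-Library.Extended_Nat"
begin

definition graph :: "'a set \<Rightarrow> ('a \<Rightarrow> 'a \<Rightarrow> bool) \<Rightarrow> bool" where
  "graph V E \<longleftrightarrow> (\<forall>x y. E x y \<longrightarrow> x \<in> V \<and> y \<in> V \<and> E y x \<and> x \<noteq> y)"

fun walk :: "('a \<Rightarrow> 'a \<Rightarrow> bool) \<Rightarrow> 'a list \<Rightarrow> bool" where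
  "walk E [] = False"
| "walk E [x] = True"
| "walk E (x # y # xs) = (E x y \<and> walk E (y # xs))"

definition connected_graph :: "'a set \<Rightarrow> ('a \<Rightarrow> 'a \<Rightarrow> bool) \<Rightarrow> bool" where
  "connected_graph V E \<longleftrightarrow>
     (\<forall>u\<in>V. \<forall>v\<in>V. \<exists>xs. walk E xs \<and> hd xs = u \<and> last xs = v)"

definition is_cycle :: "('a \<Rightarrow> 'a \<Rightarrow> bool) \<Rightarrow> 'a list \<Rightarrow> bool" where
  "is_cycle E xs \<longleftrightarrow> length xs \<ge> 3 \<and> distinct xs \<and> walk E xs \<and> E (last xs) (hd xs)"

definition acyclic_graph :: "('a \<Rightarrow> 'a \<Rightarrow> bool) \<Rightarrow> bool" where
  "acyclic_graph E \<longleftrightarrow> \<not> (\<exists>xs. is_cycle E xs)"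

definition tree :: "'a set \<Rightarrow> ('a \<Rightarrow> 'a \<Rightarrow> bool) \<Rightarrow> bool" where
  "tree V E \<longleftrightarrow> graph V E \<and> V \<noteq> {} \<and> connected_graph V E \<and> acyclic_graph E"

definition neighbours :: "('a \<Rightarrow> 'a \<Rightarrow> bool) \<Rightarrow> 'a \<Rightarrow> 'a set" where
  "neighbours E v = {u. E v u}"

definition locally_finite :: "'a set \<Rightarrow> ('a \<Rightarrow> 'a \<Rightarrow> bool) \<Rightarrow> bool" where
  "locally_finite V E \<longleftrightarrow> (\<forall>v\<in>V. finite (neighbours E v))"

definition degree :: "('a \<Rightarrow> 'a \<Rightarrow> bool) \<Rightarrow> 'a \<Rightarrow> nat" where
  "degree E v = card (neighbours E v)"

definition dist :: "('a \<Rightarrow> 'a \<Rightarrow> bool) \<Rightarrow> 'a \<Rightarrow> 'a \<Rightarrow> nat" where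
  "dist E u v = (LEAST n. \<exists>xs. walk E xs \<and> hd xs = u \<and> last xs = v \<and> length xs = Suc n)"

definition resolving_set :: "'a set \<Rightarrow> ('a \<Rightarrow> 'a \<Rightarrow> bool) \<Rightarrow> 'a set \<Rightarrow> bool" where
  "resolving_set V E S \<longleftrightarrow> S \<subseteq> V \<and>
     (\<forall>u\<in>V. \<forall>v\<in>V. u \<noteq> v \<longrightarrow> (\<exists>x\<in>S. dist E u x \<noteq> dist E v x))"

definition metric_dimension :: "'a set \<Rightarrow> ('a \<Rightarrow> 'a \<Rightarrow> bool) \<Rightarrow> enat" where
  "metric_dimension V E =
     (if \<exists>S. resolving_set V E S \<and> finite S
      then enat (LEAST k. \<exists>S. resolving_set V E S \<and> finite S \<and> card S = k)
      else \<infinity>)"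

end

theory Submission
  imports Defs
begin

(* For a vertex m and a neighbour a of m, the branch of m at a is the set of vertices reachable
   from a without passing through m.  In a tree the branches at m are pairwise disjoint, so for
   s in the branch at a we have d(m,s) = d(a,s) + 1, and for s outside it d(a,s) = d(m,s) + 1.

   Finite branching gives a finite resolving set: call S branch-hitting if for every vertex m
   and any two distinct neighbours a, b of m, some element of S lies in the branch at a or at b.
   Every nonempty branch-hitting set resolves the tree: vertices at odd distance are resolved
   by any vertex (trees are bipartite), and vertices u, w at even distance are resolved by an
   element of S in one of the two branches at the midpoint m of the u--w path containing u or w.
   If only finitely many vertices have degree at least three, the neighbours of those vertices
   together with two further vertices form a finite branch-hitting set.

   Conversely, let S be finite and resolving.  The walks chosen between pairs of elements of S
   cover only finitely many vertices, so if there were infinitely many vertices of degree at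
   least three, one of them, v, would avoid all these walks.  Then S lies inside one branch at v,
   so two distinct neighbours a, b of v have branches missing S, whence d(a,s) = d(v,s) + 1 =
   d(b,s) for all s in S, a contradiction. *)

definition walk_betw :: "('a \<Rightarrow> 'a \<Rightarrow> bool) \<Rightarrow> 'a \<Rightarrow> 'a list \<Rightarrow> 'a \<Rightarrow> bool" where
  "walk_betw E u xs v \<longleftrightarrow> walk E xs \<and> hd xs = u \<and> last xs = v"

lemma walk_Cons: "walk E (x # xs) \<longleftrightarrow> xs = [] \<or> (E x (hd xs) \<and> walk E xs)"
  by (cases xs) auto

lemma walk_append_split: "walk E (xs @ y # ys) \<longleftrightarrow> walk E (xs @ [y]) \<and> walk E (y # ys)"
proof (induction xs)
  case (Cons x xs)
  then show ?case by (cases xs) (auto simp: walk_Cons)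
qed simp

lemma walk_take: "walk E xs \<Longrightarrow> 0 < n \<Longrightarrow> walk E (take n xs)"
proof (induction xs arbitrary: n)
  case (Cons x xs)
  show ?case
  proof (cases "n = 1 \<or> xs = []")
    case False
    then have "walk E (take (n - 1) xs)" "hd (take (n - 1) xs) = hd xs"
      using Cons by (auto simp: walk_Cons)
    then show ?thesis using Cons False by (auto simp: take_Cons' walk_Cons)
  qed (use Cons.prems in \<open>auto simp: take_Cons'\<close>)
qed simp

lemma walk_drop: "walk E xs \<Longrightarrow> n < length xs \<Longrightarrow> walk E (drop n xs)"
proof (induction xs arbitrary: n)
  case (Cons x xs)
  then show ?case by (cases n) (auto simp: walk_Cons)
qed simp

lemma walk_nth: "walk E xs \<Longrightarrow> Suc i < length xs \<Longrightarrow> E (xs ! i) (xs ! Suc i)"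
proof (induction xs arbitrary: i)
  case (Cons x xs)
  then show ?case by (cases i; cases xs) (auto simp: walk_Cons)
qed simp

lemma walk_rev: "graph V E \<Longrightarrow> walk E xs \<Longrightarrow> walk E (rev xs)"
proof (induction xs)
  case (Cons x xs)
  then show ?case unfolding graph_def
    using walk_append_split[of E "rev (tl xs)" "hd xs" "[x]"] by (cases xs) (auto simp: walk_Cons)
qed simp

lemma walk_betw_rev: "graph V E \<Longrightarrow> walk_betw E u xs v \<Longrightarrow> walk_betw E v (rev xs) u"
  using walk_rev[of V E xs] by (auto simp: walk_betw_def hd_rev last_rev)

lemma walk_betw_join:
  assumes "walk_betw E u xs v" "walk_betw E v ys w"
  shows "walk_betw E u (xs @ tl ys) w" "set (xs @ tl ys) \<subseteq> set xs \<union> set ys"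
proof -
  have ne: "xs \<noteq> []" "ys \<noteq> []" using assms by (auto simp: walk_betw_def)
  have xs: "butlast xs @ [v] = xs" and ys: "v # tl ys = ys"
    using assms ne by (auto simp: walk_betw_def) (metis list.collapse)
  have eq: "xs @ tl ys = butlast xs @ v # tl ys" using xs by (metis append.assoc append_Cons append_Nil)
  have "walk E (xs @ tl ys)"
    unfolding eq using assms walk_append_split[of E "butlast xs" v "tl ys"] xs ys
    by (simp add: walk_betw_def)
  moreover have "last (xs @ tl ys) = w" using ys assms ne by (cases "tl ys") (auto simp: walk_betw_def)
  ultimately show "walk_betw E u (xs @ tl ys) w"
    using assms ne by (simp add: walk_betw_def)
  show "set (xs @ tl ys) \<subseteq> set xs \<union> set ys" using ne by (cases ys) auto
qed

lemma walk_betw_take: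
  "walk_betw E u xs v \<Longrightarrow> i < length xs \<Longrightarrow> walk_betw E u (take (Suc i) xs) (xs ! i)"
proof -
  assume w: "walk_betw E u xs v" and i: "i < length xs"
  then have "take (Suc i) xs = take i xs @ [xs ! i]" "hd (take (Suc i) xs) = hd xs"
    by (simp add: take_Suc_conv_app_nth, cases xs, auto)
  then show ?thesis using w walk_take[of E xs "Suc i"] by (simp add: walk_betw_def)
qed

lemma walk_betw_drop:
  "walk_betw E u xs v \<Longrightarrow> i < length xs \<Longrightarrow> walk_betw E (xs ! i) (drop i xs) v"
  using walk_drop[of E xs i] by (auto simp: walk_betw_def hd_drop_conv_nth)

lemma walk_betw_path:
  assumes "walk_betw E u xs v"
  shows "\<exists>ys. walk_betw E u ys v \<and> distinct ys \<and> set ys \<subseteq> set xs"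
  using assms
proof (induction "length xs" arbitrary: xs rule: less_induct)
  case less
  show ?case
  proof (cases "distinct xs")
    case False
    then obtain as y bs cs where xs: "xs = as @ y # bs @ y # cs"
      using not_distinct_decomp by fastforce
    have "walk E (as @ [y])" "walk E (y # bs @ y # cs)"
      using less.prems walk_append_split[of E as y] unfolding xs walk_betw_def by blast+
    moreover have "walk E (y # cs)"
      using calculation(2) walk_append_split[of E "y # bs" y cs] by simp
    ultimately have "walk E (as @ y # cs)" using walk_append_split[of E as y cs] by blast
    moreover have "hd (as @ y # cs) = u" "last (as @ y # cs) = v"
      using less.prems unfolding xs walk_betw_def by (cases as; simp)+
    ultimately have "walk_betw E u (as @ y # cs) v" by (simp add: walk_betw_def)
    moreover have "length (as @ y # cs) < length xs" "set (as @ y # cs) \<subseteq> set xs"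
      unfolding xs by auto
    ultimately show ?thesis using less.hyps by blast
  qed (use less.prems in blast)
qed

lemma dist_le_walk: "walk_betw E u xs v \<Longrightarrow> dist E u v < length xs"
proof -
  assume w: "walk_betw E u xs v"
  then have "length xs = Suc (length xs - 1)" by (cases xs) (auto simp: walk_betw_def)
  then have "dist E u v \<le> length xs - 1"
    unfolding dist_def using w by (intro Least_le) (auto simp: walk_betw_def)
  then show ?thesis using \<open>length xs = Suc (length xs - 1)\<close> by linarith
qed

lemma dist_self: "dist E u u = 0"
  using dist_le_walk[of E u "[u]" u] by (simp add: walk_betw_def)

definition geodesic :: "('a \<Rightarrow> 'a \<Rightarrow> bool) \<Rightarrow> 'a \<Rightarrow> 'a list \<Rightarrow> 'a \<Rightarrow> bool" where
  "geodesic E u xs v \<longleftrightarrow> walk_betw E u xs v \<and> length xs = Suc (dist E u v)"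

text \<open>Shortest walks repeat no vertex, since repetitions could be cut out.\<close>
lemma geodesic_distinct:
  assumes "geodesic E u xs v" shows "distinct xs"
proof (rule ccontr)
  assume "\<not> distinct xs"
  obtain ys where ys: "walk_betw E u ys v" "distinct ys" "set ys \<subseteq> set xs"
    using walk_betw_path[of E u xs v] assms unfolding geodesic_def by blast
  have "length ys = card (set ys)" using ys(2) by (rule distinct_card[symmetric])
  also have "\<dots> \<le> card (set xs)" using ys(3) by (intro card_mono) auto
  also have "\<dots> < length xs"
    using \<open>\<not> distinct xs\<close> card_length[of xs] card_distinct[of xs] by linarith
  finally have "length ys < length xs" .
  moreover have "length xs = Suc (dist E u v)" using assms by (simp add: geodesic_def)
  ultimately show False using dist_le_walk[OF ys(1)] by linarith
qed

definition branch :: "('a \<Rightarrow> 'a \<Rightarrow> bool) \<Rightarrow> 'a \<Rightarrow> 'a \<Rightarrow> 'a set" where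
  "branch E m a = {x. \<exists>xs. walk_betw E a xs x \<and> m \<notin> set xs}"

lemma branch_not_root: "x \<in> branch E m a \<Longrightarrow> x \<noteq> m"
proof
  assume "x \<in> branch E m a" "x = m"
  then obtain xs where "walk E xs" "last xs = x" "m \<notin> set xs"
    by (auto simp: branch_def walk_betw_def)
  then show False using \<open>x = m\<close> last_in_set[of xs] by (cases "xs = []") auto
qed

lemma branch_extend:
  assumes "x \<in> branch E m a" "walk_betw E x ys y" "m \<notin> set ys"
  shows "y \<in> branch E m a"
proof -
  obtain xs where "walk_betw E a xs x" "m \<notin> set xs" using assms(1) by (auto simp: branch_def)
  then have "walk_betw E a (xs @ tl ys) y" "m \<notin> set (xs @ tl ys)"
    using walk_betw_join[OF _ assms(2)] assms(3) by blast+
  then show ?thesis unfolding branch_def by blast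
qed

lemma branch_exit:
  assumes "walk_betw E m xs s" "s \<noteq> m"
  shows "\<exists>c\<in>set xs. E m c \<and> s \<in> branch E m c"
proof -
  obtain ys where ys: "walk_betw E m ys s" "distinct ys" "set ys \<subseteq> set xs"
    using walk_betw_path[OF assms(1)] by blast
  then obtain c rest where ys_eq: "ys = m # c # rest"
    using assms(2) by (cases ys rule: remdups_adj.cases) (auto simp: walk_betw_def)
  then have "E m c" "walk_betw E c (c # rest) s" "m \<notin> set (c # rest)"
    using ys by (auto simp: walk_betw_def)
  then have "s \<in> branch E m c" unfolding branch_def by blast
  moreover have "c \<in> set xs" using ys(3) ys_eq by auto
  ultimately show ?thesis using \<open>E m c\<close> by blast
qed

definition hits_branch_pairs :: "'a set \<Rightarrow> ('a \<Rightarrow> 'a \<Rightarrow> bool) \<Rightarrow> 'a set \<Rightarrow> bool" where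
  "hits_branch_pairs V E S \<longleftrightarrow> (\<forall>m\<in>V. \<forall>a b. E m a \<longrightarrow> E m b \<longrightarrow> a \<noteq> b \<longrightarrow>
      (\<exists>s\<in>S. s \<in> branch E m a \<union> branch E m b))"

lemma three_neighbours:
  assumes "finite (neighbours E v)" "degree E v \<ge> 3"
  shows "\<exists>a1 a2 a3. E v a1 \<and> E v a2 \<and> E v a3 \<and> a1 \<noteq> a2 \<and> a2 \<noteq> a3 \<and> a1 \<noteq> a3"
proof -
  obtain N where "N \<subseteq> neighbours E v" "card N = 3"
    using assms obtain_subset_with_card_n[of 3 "neighbours E v"] by (auto simp: degree_def)
  then obtain a1 a2 a3 where "{a1, a2, a3} \<subseteq> neighbours E v" "a1 \<noteq> a2" "a2 \<noteq> a3" "a1 \<noteq> a3"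
    by (auto simp: card_3_iff)
  then show ?thesis by (auto simp: neighbours_def)
qed

locale connected_simple_graph =
  fixes V :: "'a set" and E :: "'a \<Rightarrow> 'a \<Rightarrow> bool"
  assumes graph: "graph V E" and connected: "connected_graph V E"
begin

lemma adjacent_in_V: "E u v \<Longrightarrow> u \<in> V \<and> v \<in> V \<and> E v u \<and> u \<noteq> v"
  using graph by (simp add: graph_def)

lemma walk_in_V: "walk_betw E u xs v \<Longrightarrow> u \<in> V \<Longrightarrow> set xs \<subseteq> V"
proof (induction xs arbitrary: u)
  case (Cons x xs)
  then show ?case using adjacent_in_V by (cases xs) (auto simp: walk_betw_def walk_Cons)
qed simp

lemma geodesic_exists:
  assumes "u \<in> V" "v \<in> V" shows "\<exists>xs. geodesic E u xs v"
proof -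
  obtain xs where xs: "walk E xs" "hd xs = u" "last xs = v"
    using assms connected unfolding connected_graph_def by blast
  then have "length xs = Suc (length xs - 1)" by (cases xs) auto
  then have "\<exists>n xs. walk E xs \<and> hd xs = u \<and> last xs = v \<and> length xs = Suc n"
    using xs by blast
  from LeastI_ex[OF this] show ?thesis
    unfolding dist_def[symmetric] geodesic_def walk_betw_def by blast
qed

lemma dist_eq_0_iff: "u \<in> V \<Longrightarrow> v \<in> V \<Longrightarrow> dist E u v = 0 \<longleftrightarrow> u = v"
  using geodesic_exists[of u v] dist_self[of E u]
  by (auto simp: geodesic_def walk_betw_def length_Suc_conv)

lemma dist_adjacent: "E u v \<Longrightarrow> dist E u v = 1"
  using dist_le_walk[of E u "[u, v]" v] dist_eq_0_iff[of u v] adjacent_in_V[of u v]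
  by (simp add: walk_betw_def)

lemma dist_sym: "u \<in> V \<Longrightarrow> v \<in> V \<Longrightarrow> dist E u v = dist E v u"
proof -
  have le: "dist E v u \<le> dist E u v" if uv: "u \<in> V" "v \<in> V" for u v
  proof -
    obtain xs where xs: "geodesic E u xs v" using geodesic_exists[OF uv] by blast
    then have "walk_betw E v (rev xs) u"
      using walk_betw_rev[OF graph] by (simp add: geodesic_def)
    then have "dist E v u < length (rev xs)" by (rule dist_le_walk)
    then show ?thesis using xs by (simp add: geodesic_def)
  qed
  show "u \<in> V \<Longrightarrow> v \<in> V \<Longrightarrow> ?thesis" using le[of u v] le[of v u] by simp
qed

lemma dist_triangle:
  assumes "u \<in> V" "v \<in> V" "w \<in> V"
  shows "dist E u w \<le> dist E u v + dist E v w"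
proof -
  obtain xs ys where xs: "geodesic E u xs v" and ys: "geodesic E v ys w"
    using geodesic_exists[OF assms(1,2)] geodesic_exists[OF assms(2,3)] by blast
  then have "walk_betw E u (xs @ tl ys) w"
    using walk_betw_join(1)[of E u xs v ys w] by (simp add: geodesic_def)
  then have "dist E u w < length (xs @ tl ys)" by (rule dist_le_walk)
  then show ?thesis using xs ys by (simp add: geodesic_def)
qed

lemma dist_through_cut:
  assumes "x \<in> V" "s \<in> V" and cut: "\<And>xs. walk_betw E x xs s \<Longrightarrow> m \<in> set xs"
  shows "dist E x s = dist E x m + dist E m s"
proof -
  obtain p where p: "geodesic E x p s" using geodesic_exists assms(1,2) by blast
  then have "m \<in> set p" using cut by (simp add: geodesic_def)
  then obtain i where i: "i < length p" "p ! i = m" by (auto simp: in_set_conv_nth)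
  have "m \<in> V" using walk_in_V p assms(1) \<open>m \<in> set p\<close> by (auto simp: geodesic_def)
  have "dist E x m < Suc i"
    using dist_le_walk[OF walk_betw_take] p i by (fastforce simp: geodesic_def)
  moreover have "dist E m s < length p - i"
    using dist_le_walk[OF walk_betw_drop] p i by (fastforce simp: geodesic_def)
  moreover have "dist E x s \<le> dist E x m + dist E m s"
    using dist_triangle assms(1,2) \<open>m \<in> V\<close> by blast
  ultimately show ?thesis using p by (simp add: geodesic_def)
qed

lemma vertex_in_some_branch:
  assumes "m \<in> V" "s \<in> V" "s \<noteq> m"
  shows "\<exists>c. E m c \<and> s \<in> branch E m c"
proof -
  obtain xs where "geodesic E m xs s" using geodesic_exists[OF assms(1,2)] by blast
  then have "walk_betw E m xs s" by (simp add: geodesic_def)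
  then show ?thesis using branch_exit[OF _ assms(3)] by blast
qed

lemma finite_walk_hull:
  assumes "S \<subseteq> V" "finite S"
  obtains F where "finite F" "\<And>s t. s \<in> S \<Longrightarrow> t \<in> S \<Longrightarrow> \<exists>xs. walk_betw E s xs t \<and> set xs \<subseteq> F"
proof -
  define W where "W s t = (SOME xs. walk_betw E s xs t)" for s t
  have "walk_betw E s (W s t) t" if st: "s \<in> S" "t \<in> S" for s t
  proof -
    obtain xs where "geodesic E s xs t" using geodesic_exists[of s t] st assms(1) by blast
    then have "\<exists>xs. walk_betw E s xs t" unfolding geodesic_def by blast
    then show ?thesis unfolding W_def by (rule someI_ex)
  qed
  moreover have "finite (\<Union>s\<in>S. \<Union>t\<in>S. set (W s t))" using assms(2) by simp
  ultimately show ?thesis using that[of "\<Union>s\<in>S. \<Union>t\<in>S. set (W s t)"] by blast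
qed

end

locale tree_graph = connected_simple_graph +
  assumes acyclic: "acyclic_graph E"
begin

text \<open>Without cycles, every walk between two neighbours of v passes through v.\<close>
lemma walk_between_neighbours:
  assumes "E v a" "E v b" "a \<noteq> b" "walk_betw E a xs b"
  shows "v \<in> set xs"
proof (rule ccontr)
  assume "v \<notin> set xs"
  obtain ys where ys: "walk_betw E a ys b" "distinct ys" "set ys \<subseteq> set xs"
    using walk_betw_path[OF assms(4)] by blast
  then have "v \<notin> set ys" using \<open>v \<notin> set xs\<close> by blast
  obtain y1 y2 rest where "ys = y1 # y2 # rest"
    using ys(1) assms(3) by (cases ys rule: remdups_adj.cases) (auto simp: walk_betw_def)
  then have "is_cycle E (v # ys)"
    using ys \<open>v \<notin> set ys\<close> assms(1,2) adjacent_in_V[of v b]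
    by (auto simp: is_cycle_def walk_betw_def)
  then show False using acyclic by (auto simp: acyclic_graph_def)
qed

lemma branch_self: "E m a \<Longrightarrow> a \<in> branch E m a"
  using adjacent_in_V[of m a] unfolding branch_def walk_betw_def
  by (intro CollectI exI[of _ "[a]"]) auto

lemma branches_disjoint:
  assumes "E m a" "E m b" "a \<noteq> b" "x \<in> branch E m a"
  shows "x \<notin> branch E m b"
proof
  assume "x \<in> branch E m b"
  then obtain ys where "walk_betw E b ys x" "m \<notin> set ys" by (auto simp: branch_def)
  then have "b \<in> branch E m a"
    using branch_extend[OF assms(4) walk_betw_rev[OF graph]] by simp
  then obtain zs where "walk_betw E a zs b" "m \<notin> set zs" by (auto simp: branch_def)
  then show False using walk_between_neighbours assms(1-3) by blast
qed

lemma branch_entry: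
  assumes "E m a" "s \<in> branch E m a" "walk_betw E m xs s"
  shows "a \<in> set xs"
proof -
  obtain c where "c \<in> set xs" "E m c" "s \<in> branch E m c"
    using branch_exit[OF assms(3) branch_not_root[OF assms(2)]] by blast
  then have "c = a" using branches_disjoint[OF assms(1) \<open>E m c\<close>] assms(2) by blast
  then show ?thesis using \<open>c \<in> set xs\<close> by simp
qed

lemma dist_in_branch:
  assumes "E m a" "s \<in> V" "s \<in> branch E m a"
  shows "dist E m s = dist E a s + 1"
proof -
  have "dist E m s = dist E m a + dist E a s"
    using dist_through_cut[of m s a] branch_entry[OF assms(1,3)] assms(2) adjacent_in_V[OF assms(1)]
    by blast
  then show ?thesis using dist_adjacent[OF assms(1)] by simp
qed

lemma dist_leaving_branch:
  assumes "x \<in> V" "s \<in> V" "x \<in> branch E m b" "s \<notin> branch E m b"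
  shows "dist E x s = dist E x m + dist E m s"
proof (rule dist_through_cut[OF assms(1,2)])
  fix xs assume "walk_betw E x xs s"
  then show "m \<in> set xs" using branch_extend[OF assms(3)] assms(4) by blast
qed

lemma dist_outside_branch:
  assumes "E m a" "s \<in> V" "s \<notin> branch E m a"
  shows "dist E a s = dist E m s + 1"
  using dist_leaving_branch[OF _ assms(2) branch_self[OF assms(1)] assms(3)]
    dist_adjacent adjacent_in_V[OF assms(1)] by simp

lemma dist_adjacent_step:
  assumes "E m a" "s \<in> V"
  shows "dist E a s = dist E m s + 1 \<or> dist E m s = dist E a s + 1"
  using dist_in_branch[OF assms] dist_outside_branch[OF assms] by blast

lemma walk_dist_parity:
  assumes "walk_betw E u xs w" "u \<in> V" "s \<in> V"
  shows "even (dist E u s + dist E w s + length xs + 1)"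
  using assms(1,2)
proof (induction xs arbitrary: u)
  case (Cons x xs)
  show ?case
  proof (cases xs)
    case (Cons y ys)
    then have "E u y" "walk_betw E y xs w"
      using Cons.prems by (auto simp: walk_betw_def)
    then have "even (dist E y s + dist E w s + length xs + 1)"
      using Cons.IH adjacent_in_V by blast
    then show ?thesis using dist_adjacent_step[OF \<open>E u y\<close> assms(3)] by auto
  qed (use Cons.prems in \<open>auto simp: walk_betw_def\<close>)
qed (simp add: walk_betw_def)

text \<open>Trees are bipartite: the three pairwise distances among u, w, s have even sum.\<close>
lemma dist_parity:
  assumes "u \<in> V" "w \<in> V" "s \<in> V"
  shows "even (dist E u s + dist E w s + dist E u w)"
proof -
  obtain p where "geodesic E u p w" using geodesic_exists assms(1,2) by blast
  then show ?thesis using walk_dist_parity[OF _ assms(1,3), of p w] by (simp add: geodesic_def)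
qed

lemma midpoint_separates:
  assumes "E m a" "E m b" "a \<noteq> b" "u \<in> V" "w \<in> V" "s \<in> V"
    and "u \<in> branch E m a" "w \<in> branch E m b" "s \<in> branch E m a"
    and "dist E u m = dist E w m"
  shows "dist E u s < dist E w s"
proof -
  have V: "m \<in> V" "a \<in> V" using adjacent_in_V[OF assms(1)] by auto
  have "dist E u a + 1 = dist E u m"
    using dist_in_branch[OF assms(1,4,7)] dist_sym assms(4) V by simp
  moreover have "dist E a s + 1 = dist E m s" using dist_in_branch[OF assms(1,6,9)] by simp
  moreover have "dist E u s \<le> dist E u a + dist E a s" using dist_triangle assms(4,6) V by blast
  moreover have "s \<notin> branch E m b" using branches_disjoint[OF assms(1-3,9)] .
  then have "dist E w s = dist E w m + dist E m s"
    using dist_leaving_branch[OF assms(5,6,8)] by simp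
  ultimately show ?thesis using assms(10) by linarith
qed

lemma path_sides_in_branches:
  assumes "walk_betw E u p w" "distinct p" "0 < i" "Suc i < length p"
  shows "u \<in> branch E (p ! i) (p ! (i - 1))" "w \<in> branch E (p ! i) (p ! Suc i)"
proof -
  have "drop i p = p ! i # drop (Suc i) p" using assms(4) by (simp add: Cons_nth_drop_Suc)
  then have "p ! i \<notin> set (take i p)"
    using set_take_disj_set_drop_if_distinct[OF assms(2), of i i] by auto
  moreover have "walk_betw E u (take i p) (p ! (i - 1))"
    using walk_betw_take[OF assms(1), of "i - 1"] assms(3,4) by simp
  ultimately show "u \<in> branch E (p ! i) (p ! (i - 1))"
    using walk_betw_rev[OF graph] unfolding branch_def by fastforce
  have "p ! i \<in> set (take (Suc i) p)" using assms(4) by (simp add: take_Suc_conv_app_nth)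
  then have "p ! i \<notin> set (drop (Suc i) p)"
    using set_take_disj_set_drop_if_distinct[OF assms(2), of "Suc i" "Suc i"] by blast
  then show "w \<in> branch E (p ! i) (p ! Suc i)"
    using walk_betw_drop[OF assms(1) assms(4)] unfolding branch_def by blast
qed

lemma even_distance_midpoint:
  assumes "u \<in> V" "w \<in> V" "dist E u w = 2 * j" "j \<noteq> 0"
  shows "\<exists>m a b. E m a \<and> E m b \<and> a \<noteq> b \<and> u \<in> branch E m a \<and> w \<in> branch E m b
    \<and> dist E u m = dist E w m"
proof -
  obtain p where p: "geodesic E u p w" using geodesic_exists assms(1,2) by blast
  then have pw: "walk_betw E u p w" and len: "length p = Suc (2 * j)" and dp: "distinct p"
    using assms(3) geodesic_distinct[OF p] by (auto simp: geodesic_def)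
  define m a b where "m = p ! j" and "a = p ! (j - 1)" and "b = p ! Suc j"
  have "E a m" "E m b"
    using walk_nth[of E p "j - 1"] walk_nth[of E p j] pw len assms(4)
    unfolding m_def a_def b_def walk_betw_def by auto
  then have "E m a" using adjacent_in_V by blast
  have "a \<noteq> b" using nth_eq_iff_index_eq[OF dp, of "j - 1" "Suc j"] len assms(4)
    unfolding a_def b_def by simp
  have branches: "u \<in> branch E m a" "w \<in> branch E m b"
    using path_sides_in_branches[OF pw dp] len assms(4) unfolding m_def a_def b_def by auto
  have "m \<in> V" using adjacent_in_V[OF \<open>E m a\<close>] by blast
  have "dist E u m \<le> j"
    using dist_le_walk[OF walk_betw_take[OF pw, of j]] len unfolding m_def by simp
  moreover have "dist E m w \<le> j"
    using dist_le_walk[OF walk_betw_drop[OF pw, of j]] len unfolding m_def by simp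
  moreover have "2 * j \<le> dist E u m + dist E m w"
    using dist_triangle[OF assms(1) \<open>m \<in> V\<close> assms(2)] assms(3) by simp
  ultimately have "dist E u m = dist E w m" using dist_sym[OF \<open>m \<in> V\<close> assms(2)] by simp
  then show ?thesis using \<open>E m a\<close> \<open>E m b\<close> \<open>a \<noteq> b\<close> branches by blast
qed

lemma hits_branch_pairs_resolving:
  assumes "S \<subseteq> V" "S \<noteq> {}" and hits: "hits_branch_pairs V E S"
  shows "resolving_set V E S"
  unfolding resolving_set_def
proof (intro conjI ballI impI)
  show "S \<subseteq> V" by fact
next
  fix u w assume u: "u \<in> V" and w: "w \<in> V" and "u \<noteq> w"
  show "\<exists>s\<in>S. dist E u s \<noteq> dist E w s"
  proof (cases "even (dist E u w)")
    case False
    obtain s where "s \<in> S" using assms(2) by blast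
    then have "even (dist E u s + dist E w s + dist E u w)" using dist_parity u w assms(1) by blast
    then have "dist E u s \<noteq> dist E w s" using False by auto
    then show ?thesis using \<open>s \<in> S\<close> by blast
  next
    case True
    then obtain j where "dist E u w = 2 * j" by blast
    moreover have "j \<noteq> 0" using calculation dist_eq_0_iff[OF u w] \<open>u \<noteq> w\<close> by simp
    ultimately obtain m a b where mab: "E m a" "E m b" "a \<noteq> b" "u \<in> branch E m a" "w \<in> branch E m b"
      and eq: "dist E u m = dist E w m"
      using even_distance_midpoint[OF u w] by blast
    then obtain s where s: "s \<in> S" "s \<in> branch E m a \<union> branch E m b"
      using hits adjacent_in_V[OF mab(1)] unfolding hits_branch_pairs_def by blast
    then have "s \<in> V" using assms(1) by blast
    from s(2) have "dist E u s \<noteq> dist E w s"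
    proof
      assume "s \<in> branch E m a"
      then show ?thesis using midpoint_separates[of m a b u w s] mab eq u w \<open>s \<in> V\<close> by simp
    next
      assume "s \<in> branch E m b"
      then show ?thesis using midpoint_separates[of m b a w u s] mab eq u w \<open>s \<in> V\<close> by simp
    qed
    then show ?thesis using s(1) by blast
  qed
qed

text \<open>Finitely many branching vertices yield a finite resolving set: their neighbours
  together with two further vertices.\<close>
lemma finite_branching_resolving:
  assumes "infinite V" "locally_finite V E" "finite {v \<in> V. degree E v \<ge> 3}"
  shows "\<exists>S. resolving_set V E S \<and> finite S"
proof -
  define B where "B = {v \<in> V. degree E v \<ge> 3}"
  obtain x0 x1 where x: "x0 \<in> V" "x1 \<in> V" "x0 \<noteq> x1"
  proof -
    obtain x0 where "x0 \<in> V" using assms(1) by fastforce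
    moreover have "V - {x0} \<noteq> {}" using assms(1) infinite_remove[of V x0] by (metis finite.emptyI)
    then obtain x1 where "x1 \<in> V - {x0}" by blast
    ultimately show ?thesis using that by blast
  qed
  define S where "S = (\<Union>m\<in>B. neighbours E m) \<union> {x0, x1}"
  have "finite S"
    using assms(2,3) unfolding S_def B_def locally_finite_def by auto
  moreover have "S \<subseteq> V"
    using x adjacent_in_V unfolding S_def B_def neighbours_def by auto
  moreover have "hits_branch_pairs V E S"
    unfolding hits_branch_pairs_def
  proof (intro ballI allI impI)
    fix m a b assume m: "m \<in> V" and mab: "E m a" "E m b" "a \<noteq> b"
    show "\<exists>s\<in>S. s \<in> branch E m a \<union> branch E m b"
    proof (cases "m \<in> B")
      case True
      then have "a \<in> S" using mab(1) unfolding S_def neighbours_def by auto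
      then show ?thesis using branch_self[OF mab(1)] by blast
    next
      case False
      have "finite (neighbours E m)" using assms(2) m by (simp add: locally_finite_def)
      moreover have "{a, b} \<subseteq> neighbours E m" using mab(1,2) by (simp add: neighbours_def)
      moreover have "card (neighbours E m) \<le> card {a, b}"
        using False m mab(3) unfolding B_def degree_def by simp
      ultimately have nb: "neighbours E m = {a, b}" using card_seteq by blast
      obtain s where s: "s \<in> {x0, x1}" "s \<noteq> m" using x(3) by blast
      then obtain c where "E m c" "s \<in> branch E m c"
        using vertex_in_some_branch m x(1,2) by blast
      moreover have "c = a \<or> c = b" using \<open>E m c\<close> nb by (auto simp: neighbours_def)
      ultimately show ?thesis using s(1) unfolding S_def by blast
    qed
  qed
  moreover have "S \<noteq> {}" unfolding S_def by blast
  ultimately show ?thesis using hits_branch_pairs_resolving by blast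
qed

lemma set_within_one_branch:
  assumes avoid: "\<forall>s\<in>S. \<forall>t\<in>S. \<exists>xs. walk_betw E s xs t \<and> v \<notin> set xs"
    and "E v a" "E v b" "s \<in> S \<inter> branch E v a" "t \<in> S \<inter> branch E v b"
  shows "a = b"
proof (rule ccontr)
  assume "a \<noteq> b"
  obtain xs where "walk_betw E s xs t" "v \<notin> set xs" using avoid assms(4,5) by blast
  then have "t \<in> branch E v a" using branch_extend[of s E v a xs t] assms(4) by blast
  then show False using branches_disjoint[OF assms(2,3) \<open>a \<noteq> b\<close>] assms(5) by blast
qed

lemma neighbours_unresolved:
  assumes "S \<subseteq> V" "E v a" "E v b" "\<forall>s\<in>S. s \<notin> branch E v a \<and> s \<notin> branch E v b"
  shows "\<forall>s\<in>S. dist E a s = dist E b s"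
  using dist_outside_branch[OF assms(2)] dist_outside_branch[OF assms(3)] assms(1,4) by auto

lemma finite_resolving_finite_branching:
  assumes "locally_finite V E" "resolving_set V E S" "finite S"
  shows "finite {v \<in> V. degree E v \<ge> 3}"
proof (rule ccontr)
  assume inf: "infinite {v \<in> V. degree E v \<ge> 3}"
  have "S \<subseteq> V" using assms(2) by (simp add: resolving_set_def)
  then obtain F where "finite F"
    and F: "\<And>s t. s \<in> S \<Longrightarrow> t \<in> S \<Longrightarrow> \<exists>xs. walk_betw E s xs t \<and> set xs \<subseteq> F"
    using finite_walk_hull[OF _ assms(3)] by blast
  have "infinite ({v \<in> V. degree E v \<ge> 3} - F)" using Diff_infinite_finite[OF \<open>finite F\<close> inf] .
  then obtain v where "v \<in> {v \<in> V. degree E v \<ge> 3} - F"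
    by (metis finite.emptyI ex_in_conv)
  then have v: "v \<in> V" "degree E v \<ge> 3" "v \<notin> F" by simp_all
  have avoid: "\<forall>s\<in>S. \<forall>t\<in>S. \<exists>xs. walk_betw E s xs t \<and> v \<notin> set xs"
  proof (intro ballI)
    fix s t assume "s \<in> S" "t \<in> S"
    then obtain xs where "walk_betw E s xs t" "set xs \<subseteq> F" using F by blast
    then show "\<exists>xs. walk_betw E s xs t \<and> v \<notin> set xs" using v(3) by blast
  qed
  define hit where "hit a \<longleftrightarrow> (\<exists>s\<in>S. s \<in> branch E v a)" for a
  have one_hit: "a = b" if ab: "E v a" "E v b" "hit a" "hit b" for a b
  proof -
    obtain s t where "s \<in> S \<inter> branch E v a" "t \<in> S \<inter> branch E v b"
      using ab(3,4) unfolding hit_def by blast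
    then show ?thesis using set_within_one_branch[OF avoid ab(1,2)] by blast
  qed
  obtain a1 a2 a3 where a: "E v a1" "E v a2" "E v a3" "a1 \<noteq> a2" "a2 \<noteq> a3" "a1 \<noteq> a3"
    using three_neighbours[OF _ v(2)] assms(1) v(1) unfolding locally_finite_def by blast
  have "\<exists>a b. E v a \<and> E v b \<and> a \<noteq> b \<and> \<not> hit a \<and> \<not> hit b"
  proof (cases "hit a1")
    case True
    then show ?thesis using one_hit[of a1 a2] one_hit[of a1 a3] a by blast
  next
    case False
    then show ?thesis using one_hit[of a2 a3] a by blast
  qed
  then obtain a b where ab: "E v a" "E v b" "a \<noteq> b" "\<not> hit a" "\<not> hit b" by blast
  have "\<forall>s\<in>S. s \<notin> branch E v a \<and> s \<notin> branch E v b" using ab(4,5) unfolding hit_def by blast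
  then have "\<forall>s\<in>S. dist E a s = dist E b s"
    using neighbours_unresolved[OF \<open>S \<subseteq> V\<close> ab(1,2)] by blast
  moreover have "a \<in> V" "b \<in> V" using adjacent_in_V[OF ab(1)] adjacent_in_V[OF ab(2)] by blast+
  ultimately show False using assms(2) ab(3) unfolding resolving_set_def by blast
qed

end

lemma tree_graph_of_tree: "tree V E \<Longrightarrow> tree_graph V E"
  by (simp add: tree_def tree_graph_def tree_graph_axioms_def connected_simple_graph_def)

theorem theorem3:
  fixes V :: "'a set" and E :: "'a \<Rightarrow> 'a \<Rightarrow> bool"
  assumes "tree V E" and "infinite V" and "locally_finite V E"
  shows "metric_dimension V E \<noteq> \<infinity> \<longleftrightarrow> finite {v \<in> V. degree E v \<ge> 3}"
proof -
  interpret tree_graph V E using tree_graph_of_tree[OF assms(1)] .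
  have "metric_dimension V E \<noteq> \<infinity> \<longleftrightarrow> (\<exists>S. resolving_set V E S \<and> finite S)"
    unfolding metric_dimension_def by simp
  then show ?thesis
    using finite_branching_resolving[OF assms(2,3)] finite_resolving_finite_branching[OF assms(3)]
    by blast
qed

end
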